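(* Let $H$ be a real Hilbert space, let $D\subseteq H$ be a nonempty closed convex set, and let $C_1,\dots,C_m\subseteq D$ be closed convex sets with $C:=\bigcap_{i=1}^m C_i\neq\emptyset$. Let $P_i:=P_{C_i}:D\to C_i$ be the metric projection onto $C_i$. Fix $(\Omega,w)\in\mathcal{M}$, let $(\lambda_k)_{k\in\mathbb{N}}$ be a steering sequence, and let $u,x^0\in D$. For an index vector $t=(t_1,\dots,t_q)$ let $P[t]:=P_{t_q}P_{t_{q-1}}\cdots P_{t_1}$. Then the sequence defined by $$x^{k+1}=\lambda_k u+(1-\lambda_k)\sum_{t\in\Omega}w(t)P[t](x^k),\quad k\ge0,$$ converges strongly to $P_C(u)$.
   Context: An index vector is a finite tuple $t=(t_1,\dots,t_q)$ with each $t_\ell\in\{1,\dots,m\}$. A finite set $\Omega$ of index vectors is fit if every $i\in\{1,\dots,m\}$ appears as a component of some $t\in\Omega$. $\mathcal{M}$ denotes the collection of all pairs $(\Omega,w)$ where $\Omega$ is a fit finite set of index vectors and $w:\Omega\to(0,1]$ satisfies $\sum_{t\in\Omega}w(t)=1$. A steering sequence is a real sequence $(\lambda_k)_{k\in\mathbb{N}}$ with $\lambda_k\in[0,1]$ for all $k$, $\lim_{k\to\infty}\lambda_k=0$, $\sum_{k=0}^\infty\lambda_k=+\infty$, and $\sum_{k=0}^\infty|\lambda_{k+1}-\lambda_k|<\infty$. *)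

theory Defs
  imports "HOL-Analysis.Analysis"
begin

definition metric_proj :: "'a::{real_inner,complete_space} set \<Rightarrow> 'a \<Rightarrow> 'a" where
  "metric_proj S a = (SOME x. x \<in> S \<and> (\<forall>y\<in>S. dist a x \<le> dist a y))"

definition index_vector :: "nat \<Rightarrow> nat list \<Rightarrow> bool" where
  "index_vector m t \<longleftrightarrow> t \<noteq> [] \<and> set t \<subseteq> {1..m}"

definition fit :: "nat \<Rightarrow> nat list set \<Rightarrow> bool" where
  "fit m \<Omega> \<longleftrightarrow> finite \<Omega> \<and> (\<forall>t\<in>\<Omega>. index_vector m t) \<and> (\<forall>i\<in>{1..m}. \<exists>t\<in>\<Omega>. i \<in> set t)"

definition in_M :: "nat \<Rightarrow> nat list set \<Rightarrow> (nat list \<Rightarrow> real) \<Rightarrow> bool" where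
  "in_M m \<Omega> w \<longleftrightarrow> fit m \<Omega> \<and> (\<forall>t\<in>\<Omega>. 0 < w t \<and> w t \<le> 1) \<and> (\<Sum>t\<in>\<Omega>. w t) = 1"

definition steering_sequence :: "(nat \<Rightarrow> real) \<Rightarrow> bool" where
  "steering_sequence lam \<longleftrightarrow> (\<forall>k. 0 \<le> lam k \<and> lam k \<le> 1) \<and> lam \<longlonglongrightarrow> 0
     \<and> \<not> summable lam \<and> summable (\<lambda>k. \<bar>lam (Suc k) - lam k\<bar>)"

text \<open>P[t] = P_{t_q} ... P_{t_1}: apply P_{t_1} first.\<close>
definition proj_comp :: "(nat \<Rightarrow> 'a \<Rightarrow> 'a) \<Rightarrow> nat list \<Rightarrow> 'a \<Rightarrow> 'a" where
  "proj_comp P t x = foldl (\<lambda>y i. P i y) x t"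

end

theory Submission
  imports Defs
begin

text \<open>The averaged operator T y = (\<Sum>t\<in>\<Omega>. w t P[t] y) is nonexpansive and fixes every point of
  C, so the scheme is a Halpern iteration x (k+1) = lam k u + (1 - lam k) T (x k). The steering
  conditions give, via Xu's lemma on recursive inequalities, asymptotic regularity and hence
  x k - T (x k) \<longlonglongrightarrow> 0. Since every index occurs in a vector of positive weight and projections are
  strongly quasi-nonexpansive, a small residual forces x k close to every C i. Bounded closed convex
  sets have the finite intersection property, a substitute for weak compactness, which yields
  limsup (u - q) \<bullet> (x k - q) \<le> 0 for q = P_C u; a second application of Xu's lemma to
  norm (x k - q)^2 gives strong convergence.\<close>

section \<open>Metric projections in Hilbert space\<close>

lemma infdist_approx:
  fixes A :: "'a::metric_space set"
  assumes "A \<noteq> {}" "e > 0"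
  obtains a where "a \<in> A" "dist x a < infdist x A + e"
proof -
  have "\<not> infdist x A + e \<le> (INF a\<in>A. dist x a)"
    using infdist_notempty[OF assms(1)] assms(2) by simp
  then show ?thesis
    using that assms(1) by (meson cINF_greatest not_le)
qed

lemma Cauchy_if_dist_sq_le:
  fixes p :: "nat \<Rightarrow> 'a::real_normed_vector"
  assumes "g \<longlonglongrightarrow> 0" and "\<And>m n. norm (p m - p n)^2 \<le> g m + g n"
  shows "Cauchy p"
proof (rule metric_CauchyI)
  fix e :: real
  assume "e > 0"
  then obtain M where M: "\<And>n. n \<ge> M \<Longrightarrow> g n < e^2 / 2"
    using order_tendstoD(2)[OF assms(1), of "e^2 / 2"] by (auto simp: eventually_sequentially)
  have "dist (p m) (p n) < e" if "m \<ge> M" "n \<ge> M" for m n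
  proof -
    have "dist (p m) (p n)^2 < e^2"
      using assms(2)[of m n] M[OF that(1)] M[OF that(2)] by (simp add: dist_norm)
    then show ?thesis
      using \<open>e > 0\<close> by (simp add: power_less_imp_less_base)
  qed
  then show "\<exists>M. \<forall>m\<ge>M. \<forall>n\<ge>M. dist (p m) (p n) < e"
    by blast
qed

lemma metric_proj_exists:
  fixes S :: "'a::{real_inner,complete_space} set"
  assumes "closed S" "convex S" "S \<noteq> {}"
  shows "\<exists>p\<in>S. \<forall>y\<in>S. dist a p \<le> dist a y"
proof -
  define d where "d = infdist a S"
  have d_le: "d \<le> dist a z" if "z \<in> S" for z
    unfolding d_def using that by (rule infdist_le)
  have "\<forall>n. \<exists>y\<in>S. dist a y < d + 1 / Suc n"
    using infdist_approx[OF assms(3)] unfolding d_def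
    by (metis of_nat_0_less_iff zero_less_Suc zero_less_divide_1_iff)
  then obtain y where yS: "\<And>n. y n \<in> S" and yd: "\<And>n. dist a (y n) < d + 1 / Suc n"
    by metis
  have dist_lim: "(\<lambda>n. dist a (y n)) \<longlonglongrightarrow> d"
  proof (rule tendsto_sandwich)
    show "\<forall>\<^sub>F n in sequentially. d \<le> dist a (y n)"
      using d_le yS by simp
    show "\<forall>\<^sub>F n in sequentially. dist a (y n) \<le> d + 1 / Suc n"
      using yd by (simp add: less_imp_le)
    show "(\<lambda>n. d + 1 / Suc n) \<longlonglongrightarrow> d"
      using tendsto_add[OF tendsto_const LIMSEQ_inverse_real_of_nat] by (simp add: inverse_eq_divide)
  qed simp
  have "Cauchy y"
  proof (rule Cauchy_if_dist_sq_le)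
    have "(\<lambda>n. dist a (y n)^2 - d^2) \<longlonglongrightarrow> 0"
      using tendsto_diff[OF tendsto_power[OF dist_lim, of 2] tendsto_const[of "d^2"]] by simp
    then show "(\<lambda>n. 2 * (dist a (y n)^2 - d^2)) \<longlonglongrightarrow> 0"
      by (rule tendsto_mult_right_zero)
    fix m n
    \<comment> \<open>the midpoint lies in S, so the parallelogram law bounds the distance of two nearly
      minimizing points\<close>
    have "(1/2) *\<^sub>R (y m + y n) \<in> S"
      using convexD[OF assms(2) yS yS, of "1/2" "1/2"] by (simp add: scaleR_add_right)
    then have "d^2 \<le> norm (a - (1/2) *\<^sub>R (y m + y n))^2"
      using d_le by (metis dist_norm infdist_nonneg d_def power_mono)
    moreover have "norm (y m - y n)^2 = 2 * norm (a - y m)^2 + 2 * norm (a - y n)^2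
        - 4 * norm (a - (1/2) *\<^sub>R (y m + y n))^2"
      by (simp add: power2_norm_eq_inner inner_diff_left inner_diff_right inner_add_left
          inner_add_right inner_commute algebra_simps)
    ultimately show "norm (y m - y n)^2 \<le> 2 * (dist a (y m)^2 - d^2) + 2 * (dist a (y n)^2 - d^2)"
      by (simp add: dist_norm)
  qed
  then obtain p where "y \<longlonglongrightarrow> p"
    using Cauchy_convergent_iff convergent_def by blast
  moreover from this have "p \<in> S"
    using assms(1) yS closed_sequentially by blast
  ultimately have "dist a p = d"
    using dist_lim tendsto_dist[OF tendsto_const] LIMSEQ_unique by blast
  then show ?thesis
    using \<open>p \<in> S\<close> d_le by auto
qed

context
  fixes S :: "'a::{real_inner,complete_space} set"
  assumes closed_S: "closed S" and convex_S: "convex S"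
begin

lemma metric_proj_mem: "S \<noteq> {} \<Longrightarrow> metric_proj S a \<in> S"
  and metric_proj_minimal: "y \<in> S \<Longrightarrow> dist a (metric_proj S a) \<le> dist a y"
proof -
  have spec: "metric_proj S a \<in> S \<and> (\<forall>y\<in>S. dist a (metric_proj S a) \<le> dist a y)" if "S \<noteq> {}"
  proof -
    have "\<exists>p. p \<in> S \<and> (\<forall>y\<in>S. dist a p \<le> dist a y)"
      using metric_proj_exists[OF closed_S convex_S that] by blast
    then show ?thesis
      unfolding metric_proj_def by (rule someI_ex)
  qed
  show "S \<noteq> {} \<Longrightarrow> metric_proj S a \<in> S"
    using spec by blast
  show "y \<in> S \<Longrightarrow> dist a (metric_proj S a) \<le> dist a y"
    using spec by blast
qed

lemma metric_proj_id: "y \<in> S \<Longrightarrow> metric_proj S y = y"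
  using metric_proj_minimal[of y y] by simp

lemma infdist_metric_proj:
  assumes "S \<noteq> {}"
  shows "infdist a S = dist a (metric_proj S a)"
proof (rule antisym)
  show "infdist a S \<le> dist a (metric_proj S a)"
    using assms by (intro infdist_le metric_proj_mem)
  show "dist a (metric_proj S a) \<le> infdist a S"
    unfolding infdist_notempty[OF assms] using assms metric_proj_minimal
    by (intro cINF_greatest) auto
qed

lemma metric_proj_variational_ineq:
  assumes "y \<in> S"
  shows "inner (a - metric_proj S a) (y - metric_proj S a) \<le> 0"
proof (rule ccontr)
  define p where "p = metric_proj S a"
  define v where "v = y - p"
  define c where "c = inner (a - p) v"
  assume "\<not> ?thesis"
  then have "c > 0"
    unfolding c_def p_def v_def by simp
  then have "norm v ^ 2 > 0"
    unfolding c_def by auto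
  define t where "t = min 1 (c / norm v ^ 2)"
  have t: "0 < t" "t \<le> 1" "t * norm v ^ 2 \<le> c"
    using \<open>c > 0\<close> \<open>norm v ^ 2 > 0\<close> unfolding t_def by (auto simp: min_def field_simps)
  have "p + t *\<^sub>R v = (1 - t) *\<^sub>R p + t *\<^sub>R y"
    unfolding v_def by (simp add: algebra_simps)
  also have "\<dots> \<in> S"
  proof -
    have "S \<noteq> {}"
      using assms by auto
    then show ?thesis
      using convexD[OF convex_S metric_proj_mem assms, of "1 - t" t] t unfolding p_def by simp
  qed
  finally have "norm (a - p)^2 \<le> norm (a - (p + t *\<^sub>R v))^2"
    using metric_proj_minimal unfolding p_def by (simp add: dist_norm power_mono)
  also have "\<dots> = norm (a - p)^2 - 2 * t * c + t^2 * norm v ^ 2"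
    unfolding c_def by (simp add: power2_norm_eq_inner inner_diff_left inner_diff_right
        inner_add_left inner_add_right inner_commute algebra_simps power2_eq_square[of t])
  finally have "2 * c \<le> t * norm v ^ 2"
    using t by (simp add: power2_eq_square)
  then show False
    using t \<open>c > 0\<close> by simp
qed

lemma metric_proj_dist_sq_le:
  assumes "z \<in> S"
  shows "norm (metric_proj S y - z)^2 + norm (y - metric_proj S y)^2 \<le> norm (y - z)^2"
proof -
  define p where "p = metric_proj S y"
  have "norm (y - z)^2 = norm (p - z)^2 + norm (y - p)^2 - 2 * inner (y - p) (z - p)"
    by (simp add: power2_norm_eq_inner inner_diff_left inner_diff_right inner_commute algebra_simps)
  then show ?thesis
    using metric_proj_variational_ineq[OF assms, of y] unfolding p_def by linarith
qed

lemma metric_proj_firmly_nonexpansive: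
  assumes "S \<noteq> {}"
  shows "norm (metric_proj S a - metric_proj S b)^2
    \<le> inner (metric_proj S a - metric_proj S b) (a - b)"
proof -
  define pa where "pa = metric_proj S a"
  define pb where "pb = metric_proj S b"
  have "norm (pa - pb)^2 - inner (pa - pb) (a - b) = inner (a - pa) (pb - pa) + inner (b - pb) (pa - pb)"
    by (simp add: power2_norm_eq_inner inner_diff_left inner_diff_right inner_commute algebra_simps)
  moreover have "inner (a - pa) (pb - pa) \<le> 0" "inner (b - pb) (pa - pb) \<le> 0"
    unfolding pa_def pb_def using metric_proj_variational_ineq metric_proj_mem[OF assms] by auto
  ultimately show ?thesis
    unfolding pa_def pb_def by linarith
qed

lemma metric_proj_nonexpansive:
  assumes "S \<noteq> {}"
  shows "norm (metric_proj S a - metric_proj S b) \<le> norm (a - b)"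
proof -
  define n where "n = norm (metric_proj S a - metric_proj S b)"
  have "n * n \<le> n * norm (a - b)"
    using metric_proj_firmly_nonexpansive[OF assms, of a b]
      Cauchy_Schwarz_ineq2[of "metric_proj S a - metric_proj S b" "a - b"]
    unfolding n_def by (simp add: power2_eq_square)
  moreover have "n \<ge> 0"
    unfolding n_def by simp
  ultimately show ?thesis
    unfolding n_def by (cases "n = 0") (auto simp: mult_le_cancel_left)
qed

lemma convex_infdist_le:
  assumes "S \<noteq> {}"
  shows "convex {y. infdist y S \<le> r}"
proof (rule convexI)
  fix y z and u v :: real
  assume y: "y \<in> {y. infdist y S \<le> r}" and z: "z \<in> {y. infdist y S \<le> r}"
    and uv: "0 \<le> u" "0 \<le> v" "u + v = 1"
  define py where "py = metric_proj S y"
  define pz where "pz = metric_proj S z"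
  have "u *\<^sub>R py + v *\<^sub>R pz \<in> S"
    unfolding py_def pz_def using convexD[OF convex_S metric_proj_mem metric_proj_mem] assms uv by blast
  then have "infdist (u *\<^sub>R y + v *\<^sub>R z) S \<le> norm (u *\<^sub>R (y - py) + v *\<^sub>R (z - pz))"
    using infdist_le by (fastforce simp: dist_norm algebra_simps)
  also have "\<dots> \<le> u * norm (y - py) + v * norm (z - pz)"
    using uv by (metis abs_of_nonneg norm_scaleR norm_triangle_ineq)
  also have "\<dots> \<le> u * r + v * r"
    using y z uv infdist_metric_proj[OF assms] unfolding py_def pz_def
    by (intro add_mono mult_left_mono) (auto simp: dist_norm)
  finally show "u *\<^sub>R y + v *\<^sub>R z \<in> {y. infdist y S \<le> r}"
    using uv by (simp add: distrib_right[symmetric])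
qed

end

text \<open>The projections of the origin onto the nested sets have increasing norms, and the Pythagorean
  inequality turns convergence of these norms into the Cauchy property.\<close>
lemma decseq_closed_convex_Inter_nonempty:
  fixes K :: "nat \<Rightarrow> 'a::{real_inner,complete_space} set"
  assumes "decseq K" and "\<And>n. closed (K n)" "\<And>n. convex (K n)" "\<And>n. K n \<noteq> {}"
    and "bounded (K 0)"
  shows "(\<Inter>n. K n) \<noteq> {}"
proof -
  define p where "p n = metric_proj (K n) 0" for n
  have pK: "p m \<in> K n" if "n \<le> m" for n m
    using metric_proj_mem[OF assms(2-4)] \<open>decseq K\<close> that unfolding p_def decseq_def by blast
  have gap: "norm (p m - p n)^2 \<le> norm (p m)^2 - norm (p n)^2" if "n \<le> m" for n m
    using metric_proj_dist_sq_le[OF assms(2,3) pK[OF that], of 0] unfolding p_def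
    by (simp add: norm_minus_commute)
  have "incseq (\<lambda>n. norm (p n)^2)"
  proof (rule incseq_SucI)
    show "norm (p n)^2 \<le> norm (p (Suc n))^2" for n
      using gap[of n "Suc n"] zero_le_power2[of "norm (p (Suc n) - p n)"] by linarith
  qed
  moreover obtain R where "\<And>n. norm (p n) \<le> R"
    using assms(5) pK[of 0] unfolding bounded_iff by blast
  then have "norm (p n)^2 \<le> R^2" for n
    by (simp add: power_mono)
  ultimately obtain L where L: "(\<lambda>n. norm (p n)^2) \<longlonglongrightarrow> L" and "\<And>n. norm (p n)^2 \<le> L"
    using incseq_convergent by blast
  have "Cauchy p"
  proof (rule Cauchy_if_dist_sq_le)
    show "(\<lambda>n. L - norm (p n)^2) \<longlonglongrightarrow> 0"
      using tendsto_diff[OF tendsto_const[of L] L] by simp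
    show "norm (p m - p n)^2 \<le> (L - norm (p m)^2) + (L - norm (p n)^2)" for m n
      using gap[of n m] gap[of m n] \<open>\<And>n. norm (p n)^2 \<le> L\<close>[of m] \<open>\<And>n. norm (p n)^2 \<le> L\<close>[of n]
      by (cases "n \<le> m") (auto simp: norm_minus_commute)
  qed
  then obtain q where "p \<longlonglongrightarrow> q"
    using Cauchy_convergent_iff convergent_def by blast
  have "q \<in> K n" for n
  proof (rule closed_sequentially[OF assms(2)])
    show "(\<lambda>k. p (k + n)) \<longlonglongrightarrow> q"
      using \<open>p \<longlonglongrightarrow> q\<close> by (rule LIMSEQ_ignore_initial_segment)
    show "p (k + n) \<in> K n" for k
      by (rule pK) simp
  qed
  then show ?thesis
    by blast
qed

section \<open>Compositions and averages of projections\<close>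

lemma proj_comp_Nil [simp]: "proj_comp P [] y = y"
  by (simp add: proj_comp_def)

lemma proj_comp_Cons [simp]: "proj_comp P (i # t) y = proj_comp P t (P i y)"
  by (simp add: proj_comp_def)

lemma proj_comp_nonexpansive:
  assumes "\<And>i y z. i \<in> set t \<Longrightarrow> norm (P i y - P i z) \<le> norm (y - z)"
  shows "norm (proj_comp P t y - proj_comp P t z) \<le> norm (y - z)"
  using assms
proof (induction t arbitrary: y z)
  case (Cons i t)
  then have "norm (proj_comp P t (P i y) - proj_comp P t (P i z)) \<le> norm (P i y - P i z)"
    by simp
  also have "\<dots> \<le> norm (y - z)"
    using Cons.prems by simp
  finally show ?case
    by simp
qed simp

lemma proj_comp_fixed: "(\<And>i. i \<in> set t \<Longrightarrow> P i z = z) \<Longrightarrow> proj_comp P t z = z"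
  by (induction t) auto

lemma proj_comp_dist_le:
  assumes "\<And>i y. i \<in> set t \<Longrightarrow> norm (P i y - z)^2 + norm (y - P i y)^2 \<le> norm (y - z)^2"
  shows "norm (proj_comp P t y - z) \<le> norm (y - z)"
  using assms
proof (induction t arbitrary: y)
  case (Cons i t)
  have "i \<in> set (i # t)"
    by simp
  from Cons.prems[OF this, of y] have "norm (P i y - z)^2 \<le> norm (y - z)^2"
    using zero_le_power2[of "norm (y - P i y)"] by linarith
  then have "norm (P i y - z) \<le> norm (y - z)"
    by (rule power2_le_imp_le) simp
  with Cons show ?case
    by (auto intro: order_trans)
qed simp

text \<open>Telescoping the squared decrease of the distance to z bounds every single step of the
  composition; nonexpansiveness then transports the bound for the later factors back to y.\<close>
lemma proj_comp_displacement_le: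
  assumes nonexp: "\<And>i y y'. i \<in> set t \<Longrightarrow> norm (P i y - P i y') \<le> norm (y - y')"
    and strong: "\<And>i y. i \<in> set t \<Longrightarrow> norm (P i y - z)^2 + norm (y - P i y)^2 \<le> norm (y - z)^2"
    and "j \<in> set t"
  shows "norm (P j y - y)
    \<le> (2 * real (length t) + 1) * sqrt (norm (y - z)^2 - norm (proj_comp P t y - z)^2)"
  using assms
proof (induction t arbitrary: y)
  case (Cons i t)
  define y' where "y' = P i y"
  define g where "g = norm (y - z)^2 - norm (proj_comp P (i # t) y - z)^2"
  define g' where "g' = norm (y' - z)^2 - norm (proj_comp P t y' - z)^2"
  define L where "L = 2 * real (length t) + 1"
  have "norm (proj_comp P t y' - z) \<le> norm (y' - z)"
    using Cons.prems(2) by (intro proj_comp_dist_le) simp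
  then have "0 \<le> g'"
    unfolding g'_def by (simp add: power_mono)
  moreover have "norm (y - y')^2 + norm (y' - z)^2 \<le> norm (y - z)^2"
    using Cons.prems(2)[of i y] unfolding y'_def by simp
  ultimately have "norm (y' - y)^2 + g' \<le> g"
    unfolding g_def g'_def y'_def by (simp add: norm_minus_commute)
  with \<open>0 \<le> g'\<close> have step: "norm (y' - y) \<le> sqrt g" and "sqrt g' \<le> sqrt g" and "0 \<le> g"
    by (auto intro: real_le_rsqrt) (smt (verit) zero_le_power2)+
  have "norm (P j y - y) \<le> (L + 2) * sqrt g"
  proof (cases "j \<in> set t")
    case True
    have "norm (P j y - y) \<le> norm (P j y - P j y') + norm (P j y' - y') + norm (y' - y)"
      using norm_triangle_ineq[of "P j y - P j y'" "P j y' - y'"]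
        norm_triangle_ineq[of "(P j y - P j y') + (P j y' - y')" "y' - y"]
      by simp
    moreover have "norm (P j y - P j y') \<le> norm (y' - y)"
      using Cons.prems(1)[of j y y'] True by (simp add: norm_minus_commute)
    moreover have "norm (P j y' - y') \<le> L * sqrt g'"
      using Cons.IH[of y'] Cons.prems True unfolding L_def g'_def by simp
    moreover have "L * sqrt g' \<le> L * sqrt g"
      using \<open>sqrt g' \<le> sqrt g\<close> unfolding L_def by (simp add: mult_left_mono)
    ultimately show ?thesis
      using step by (simp add: algebra_simps)
  next
    case False
    then have "norm (P j y - y) \<le> sqrt g"
      using Cons.prems(3) step unfolding y'_def by simp
    also have "\<dots> \<le> (L + 2) * sqrt g"
      using \<open>0 \<le> g\<close> unfolding L_def by (simp add: mult_le_cancel_right1)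
    finally show ?thesis .
  qed
  then show ?case
    unfolding L_def g_def by (simp add: algebra_simps)
qed simp

lemma norm_convex_combination_sq_le:
  fixes f :: "'b \<Rightarrow> 'a::real_inner"
  assumes "\<And>t. t \<in> A \<Longrightarrow> 0 \<le> w t" and "sum w A = 1"
  shows "norm (\<Sum>t\<in>A. w t *\<^sub>R f t)^2 \<le> (\<Sum>t\<in>A. w t * norm (f t)^2)"
proof -
  define M where "M = (\<Sum>t\<in>A. w t * norm (f t))"
  have "norm (\<Sum>t\<in>A. w t *\<^sub>R f t) \<le> (\<Sum>t\<in>A. norm (w t *\<^sub>R f t))"
    by (rule norm_sum)
  also have "\<dots> = M"
    unfolding M_def using assms(1) by (intro sum.cong) auto
  finally have "norm (\<Sum>t\<in>A. w t *\<^sub>R f t)^2 \<le> M^2"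
    by (simp add: power_mono)
  moreover have "0 \<le> (\<Sum>t\<in>A. w t * (norm (f t) - M)^2)"
    using assms(1) by (intro sum_nonneg) auto
  moreover have "(\<Sum>t\<in>A. w t * (norm (f t) - M)^2)
      = (\<Sum>t\<in>A. w t * norm (f t)^2) - 2 * M * (\<Sum>t\<in>A. w t * norm (f t)) + M^2 * sum w A"
    by (simp add: power2_diff algebra_simps sum.distrib sum_subtractf sum_distrib_left
        sum_distrib_right)
  ultimately show ?thesis
    using assms(2) unfolding M_def by (simp add: power2_eq_square)
qed

definition averaged_comp ::
    "(nat \<Rightarrow> 'a \<Rightarrow> 'a) \<Rightarrow> nat list set \<Rightarrow> (nat list \<Rightarrow> real) \<Rightarrow> 'a \<Rightarrow> 'a::real_vector"
  where "averaged_comp P \<Omega> w y = (\<Sum>t\<in>\<Omega>. w t *\<^sub>R proj_comp P t y)"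

context
  fixes P :: "nat \<Rightarrow> 'a::real_inner \<Rightarrow> 'a" and \<Omega> and w :: "nat list \<Rightarrow> real"
  assumes w_nonneg: "\<And>t. t \<in> \<Omega> \<Longrightarrow> 0 \<le> w t" and w_sum: "sum w \<Omega> = 1"
begin

lemma averaged_comp_fixed:
  assumes "\<And>t i. t \<in> \<Omega> \<Longrightarrow> i \<in> set t \<Longrightarrow> P i z = z"
  shows "averaged_comp P \<Omega> w z = z"
proof -
  have "averaged_comp P \<Omega> w z = (\<Sum>t\<in>\<Omega>. w t *\<^sub>R z)"
    unfolding averaged_comp_def using assms by (intro sum.cong refl) (simp add: proj_comp_fixed)
  also have "\<dots> = z"
    using w_sum by (simp add: scaleR_sum_left[symmetric])
  finally show ?thesis .
qed

lemma averaged_comp_nonexpansive: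
  assumes "\<And>t i y z. t \<in> \<Omega> \<Longrightarrow> i \<in> set t \<Longrightarrow> norm (P i y - P i z) \<le> norm (y - z)"
  shows "norm (averaged_comp P \<Omega> w y - averaged_comp P \<Omega> w z) \<le> norm (y - z)"
proof -
  have "norm (averaged_comp P \<Omega> w y - averaged_comp P \<Omega> w z)
      = norm (\<Sum>t\<in>\<Omega>. w t *\<^sub>R (proj_comp P t y - proj_comp P t z))"
    unfolding averaged_comp_def by (simp add: sum_subtractf scaleR_diff_right)
  also have "\<dots> \<le> (\<Sum>t\<in>\<Omega>. norm (w t *\<^sub>R (proj_comp P t y - proj_comp P t z)))"
    by (rule norm_sum)
  also have "\<dots> \<le> (\<Sum>t\<in>\<Omega>. w t * norm (y - z))"
  proof (rule sum_mono)
    fix t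
    assume "t \<in> \<Omega>"
    then have "norm (proj_comp P t y - proj_comp P t z) \<le> norm (y - z)"
      using assms by (intro proj_comp_nonexpansive) blast
    then show "norm (w t *\<^sub>R (proj_comp P t y - proj_comp P t z)) \<le> w t * norm (y - z)"
      using w_nonneg[OF \<open>t \<in> \<Omega>\<close>] by (simp add: mult_left_mono)
  qed
  also have "\<dots> = norm (y - z)"
    using w_sum by (simp add: sum_distrib_right[symmetric])
  finally show ?thesis .
qed

lemma averaged_comp_dist_sq_gap:
  assumes "\<And>t. t \<in> \<Omega> \<Longrightarrow> norm (proj_comp P t y - z) \<le> norm (y - z)" and "s \<in> \<Omega>"
  shows "w s * (norm (y - z)^2 - norm (proj_comp P s y - z)^2)
    \<le> norm (y - z)^2 - norm (averaged_comp P \<Omega> w y - z)^2"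
proof -
  have "finite \<Omega>"
    using w_sum by (metis sum.infinite zero_neq_one)
  have "w s * (norm (y - z)^2 - norm (proj_comp P s y - z)^2)
      \<le> (\<Sum>t\<in>\<Omega>. w t * (norm (y - z)^2 - norm (proj_comp P t y - z)^2))"
  proof (rule member_le_sum[OF assms(2) _ \<open>finite \<Omega>\<close>])
    fix t
    assume "t \<in> \<Omega> - {s}"
    then have "norm (proj_comp P t y - z)^2 \<le> norm (y - z)^2"
      using assms(1) by (simp add: power_mono)
    then show "0 \<le> w t * (norm (y - z)^2 - norm (proj_comp P t y - z)^2)"
      using w_nonneg \<open>t \<in> \<Omega> - {s}\<close> by simp
  qed
  also have "\<dots> = norm (y - z)^2 - (\<Sum>t\<in>\<Omega>. w t * norm (proj_comp P t y - z)^2)"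
    using w_sum by (simp add: right_diff_distrib sum_subtractf sum_distrib_right[symmetric])
  also have "\<dots> \<le> norm (y - z)^2 - norm (averaged_comp P \<Omega> w y - z)^2"
  proof -
    have "averaged_comp P \<Omega> w y - z = (\<Sum>t\<in>\<Omega>. w t *\<^sub>R (proj_comp P t y - z))"
      unfolding averaged_comp_def using w_sum
      by (simp add: scaleR_diff_right sum_subtractf scaleR_sum_left[symmetric])
    then show ?thesis
      using norm_convex_combination_sq_le[OF w_nonneg w_sum] by simp
  qed
  finally show ?thesis .
qed

end

lemma dist_sq_decrease_le:
  fixes y y' z :: "'a::real_normed_vector"
  assumes "norm (y' - z) \<le> norm (y - z)" and "norm (y - z) \<le> R"
  shows "norm (y - z)^2 - norm (y' - z)^2 \<le> 2 * R * norm (y - y')"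
proof -
  have "norm (y - z) - norm (y' - z) \<le> norm (y - y')"
    using norm_triangle_ineq2[of "y - z" "y' - z"] by simp
  then have "(norm (y - z) - norm (y' - z)) * (norm (y - z) + norm (y' - z)) \<le> norm (y - y') * (2 * R)"
    using assms by (intro mult_mono) auto
  then show ?thesis
    by (simp add: power2_eq_square algebra_simps)
qed

locale averaged_projections =
  fixes Cs :: "nat \<Rightarrow> 'a::{real_inner,complete_space} set" and \<Omega> :: "nat list set"
    and w :: "nat list \<Rightarrow> real" and z :: 'a
  assumes w_nonneg: "\<And>t. t \<in> \<Omega> \<Longrightarrow> 0 \<le> w t" and w_sum: "sum w \<Omega> = 1"
    and sets: "\<And>t i. t \<in> \<Omega> \<Longrightarrow> i \<in> set t \<Longrightarrow> closed (Cs i) \<and> convex (Cs i) \<and> z \<in> Cs i"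
begin

abbreviation T :: "'a \<Rightarrow> 'a"
  where "T \<equiv> averaged_comp (\<lambda>i. metric_proj (Cs i)) \<Omega> w"

lemma T_fixed: "T z = z"
  using sets by (intro averaged_comp_fixed[OF w_nonneg w_sum] metric_proj_id) auto

lemma T_nonexpansive: "norm (T y - T y') \<le> norm (y - y')"
  using sets by (intro averaged_comp_nonexpansive[OF w_nonneg w_sum] metric_proj_nonexpansive) auto

lemma infdist_le_residual:
  assumes "s \<in> \<Omega>" "0 < w s" "i \<in> set s" and "norm (y - z) \<le> R"
  shows "infdist y (Cs i) \<le> (2 * real (length s) + 1) * sqrt (2 * R * norm (y - T y) / w s)"
proof -
  let ?P = "\<lambda>i. metric_proj (Cs i)"
  define G where "G = norm (y - z)^2 - norm (proj_comp ?P s y - z)^2"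
  have P: "norm (?P j v - ?P j v') \<le> norm (v - v')"
    "norm (?P j v - z)^2 + norm (v - ?P j v)^2 \<le> norm (v - z)^2"
    if "t \<in> \<Omega>" "j \<in> set t" for t j v v'
    using sets[OF that] by (auto intro: metric_proj_nonexpansive metric_proj_dist_sq_le)
  have fejer: "norm (proj_comp ?P t y - z) \<le> norm (y - z)" if "t \<in> \<Omega>" for t
    using P(2)[OF that] by (rule proj_comp_dist_le)
  have "norm (T y - z) \<le> norm (y - z)"
    using T_nonexpansive[of y z] T_fixed by simp
  then have "w s * G \<le> 2 * R * norm (y - T y)"
    using averaged_comp_dist_sq_gap[OF w_nonneg w_sum fejer \<open>s \<in> \<Omega>\<close>]
      dist_sq_decrease_le[OF _ \<open>norm (y - z) \<le> R\<close>]
    unfolding G_def by fastforce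
  then have "G \<le> 2 * R * norm (y - T y) / w s"
    using \<open>0 < w s\<close> by (simp add: pos_le_divide_eq mult.commute)
  have "infdist y (Cs i) = norm (?P i y - y)"
    using infdist_metric_proj[of "Cs i" y] sets[OF \<open>s \<in> \<Omega>\<close> \<open>i \<in> set s\<close>]
    by (auto simp: dist_norm norm_minus_commute)
  also have "\<dots> \<le> (2 * real (length s) + 1) * sqrt G"
    unfolding G_def using P[OF \<open>s \<in> \<Omega>\<close>] \<open>i \<in> set s\<close> by (rule proj_comp_displacement_le)
  also have "\<dots> \<le> (2 * real (length s) + 1) * sqrt (2 * R * norm (y - T y) / w s)"
    using \<open>G \<le> _\<close> by (intro mult_left_mono) auto
  finally show ?thesis .
qed

lemma infdist_tendsto_zero:
  assumes "s \<in> \<Omega>" "0 < w s" "i \<in> set s"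
    and "\<And>k. norm (x k - z) \<le> R" and "(\<lambda>k. x k - T (x k)) \<longlonglongrightarrow> 0"
  shows "(\<lambda>k. infdist (x k) (Cs i)) \<longlonglongrightarrow> 0"
proof (rule tendsto_sandwich[where f = "\<lambda>k. 0"])
  define L where "L = 2 * real (length s) + 1"
  show "\<forall>\<^sub>F k in sequentially. infdist (x k) (Cs i) \<le> L * sqrt (2 * R * norm (x k - T (x k)) / w s)"
    using infdist_le_residual[OF assms(1-4)] unfolding L_def by simp
  have "(\<lambda>k. L * sqrt (2 * R * norm (x k - T (x k)) / w s)) \<longlonglongrightarrow> L * sqrt (2 * R * 0 / w s)"
    using assms(2,5) by (intro tendsto_intros) (simp_all add: tendsto_norm_zero)
  then show "(\<lambda>k. L * sqrt (2 * R * norm (x k - T (x k)) / w s)) \<longlonglongrightarrow> 0"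
    by simp
qed (simp_all add: infdist_nonneg)

end

section \<open>Points approaching finitely many closed convex sets\<close>

lemma mem_closed_if_infdist_le_inverse_Suc:
  assumes "closed S" "S \<noteq> {}" and "\<And>n. infdist p S \<le> 1 / Suc n"
  shows "p \<in> S"
proof -
  have "infdist p S \<le> 0"
  proof (rule tendsto_le[OF trivial_limit_sequentially _ tendsto_const])
    show "(\<lambda>n. 1 / real (Suc n)) \<longlonglongrightarrow> 0"
      using LIMSEQ_inverse_real_of_nat by (simp add: inverse_eq_divide)
  qed (intro always_eventually allI assms(3))
  then show ?thesis
    using assms(1,2) in_closed_iff_infdist_zero infdist_nonneg by (metis order.antisym)
qed

text \<open>This replaces the weak cluster points of the classical argument: the sets K n below are closed,
  convex and bounded, so they have a common point, which lies in every C i but still satisfies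
  v \<bullet> (p - q) \<ge> e.\<close>
lemma eventually_inner_le_if_infdist_tendsto_zero:
  fixes x :: "nat \<Rightarrow> 'a::{real_inner,complete_space}" and Cs :: "'i \<Rightarrow> 'a set"
  assumes "finite I" and sets: "\<And>i. i \<in> I \<Longrightarrow> closed (Cs i) \<and> convex (Cs i) \<and> Cs i \<noteq> {}"
    and bounded: "\<And>k. norm (x k - q) \<le> R"
    and approach: "\<And>i. i \<in> I \<Longrightarrow> (\<lambda>k. infdist (x k) (Cs i)) \<longlonglongrightarrow> 0"
    and obtuse: "\<And>y. (\<And>i. i \<in> I \<Longrightarrow> y \<in> Cs i) \<Longrightarrow> inner v (y - q) \<le> 0"
    and "e > 0"
  shows "eventually (\<lambda>k. inner v (x k - q) \<le> e) sequentially"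
proof (rule ccontr)
  define H where "H = {y. inner v y \<ge> e + inner v q}"
  define K where "K n = cball q R \<inter> H \<inter> (\<Inter>i\<in>I. {y. infdist y (Cs i) \<le> 1 / Suc n})" for n
  assume "\<not> ?thesis"
  then have often: "frequently (\<lambda>k. x k \<in> H) sequentially"
    unfolding not_eventually H_def by (auto elim: frequently_elim1 simp: inner_diff_right)
  have "(\<Inter>n. K n) \<noteq> {}"
  proof (rule decseq_closed_convex_Inter_nonempty)
    have "1 / real (Suc n) \<le> 1 / real (Suc m)" if "m \<le> n" for m n
      using that by (simp add: frac_le)
    then show "decseq K"
      unfolding K_def decseq_def by (blast intro: order_trans)
    show "K n \<noteq> {}" for n
    proof -
      have "eventually (\<lambda>k. \<forall>i\<in>I. infdist (x k) (Cs i) < 1 / Suc n) sequentially"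
        using approach \<open>finite I\<close> by (intro eventually_ball_finite ballI order_tendstoD(2)) auto
      from frequently_eventually_frequently[OF often this] obtain k
        where "x k \<in> H" "\<forall>i\<in>I. infdist (x k) (Cs i) < 1 / Suc n"
        by (auto dest: frequently_ex)
      then have "x k \<in> K n"
        unfolding K_def using bounded[of k] by (auto simp: dist_norm norm_minus_commute less_imp_le)
      then show ?thesis
        by blast
    qed
    show "closed (K n)" for n
      unfolding K_def H_def by (intro closed_Int closed_INT closed_Collect_le continuous_intros ballI) auto
    show "convex (K n)" for n
      unfolding K_def H_def using sets
      by (intro convex_Int convex_INT convex_halfspace_ge convex_infdist_le ballI) auto
    show "bounded (K 0)"
      unfolding K_def by auto
  qed
  then obtain p where p: "\<And>n. p \<in> K n"
    by blast
  have "p \<in> Cs i" if "i \<in> I" for i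
    using sets[OF that] p that unfolding K_def by (auto intro: mem_closed_if_infdist_le_inverse_Suc)
  then have "inner v (p - q) \<le> 0"
    by (rule obtuse)
  moreover have "e \<le> inner v (p - q)"
    using p[of 0] unfolding K_def H_def by (auto simp: inner_diff_right)
  ultimately show False
    using \<open>e > 0\<close> by simp
qed

section \<open>Xu's lemma on recursive inequalities\<close>

lemma prod_one_minus_tendsto_zero:
  fixes g :: "nat \<Rightarrow> real"
  assumes "\<And>k. 0 \<le> g k" "\<And>k. g k \<le> 1" "\<not> summable g"
  shows "(\<lambda>j. \<Prod>i<j. 1 - g (N + i)) \<longlonglongrightarrow> 0"
proof (rule tendsto_sandwich)
  define S where "S j = (\<Sum>i<j. g (N + i))" for j
  show "\<forall>\<^sub>F j in sequentially. 0 \<le> (\<Prod>i<j. 1 - g (N + i))"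
    using assms by (simp add: prod_nonneg)
  show "\<forall>\<^sub>F j in sequentially. (\<Prod>i<j. 1 - g (N + i)) \<le> exp (- S j)"
  proof (rule always_eventually, rule allI)
    fix j
    have "(\<Prod>i<j. 1 - g (N + i)) \<le> (\<Prod>i<j. exp (- g (N + i)))"
      using assms exp_ge_add_one_self[of "- g _"] by (intro prod_mono) auto
    then show "(\<Prod>i<j. 1 - g (N + i)) \<le> exp (- S j)"
      unfolding S_def by (simp add: exp_sum[symmetric] sum_negf)
  qed
  have "filterlim S at_top sequentially"
    unfolding filterlim_at_top
  proof
    fix Z
    have "\<exists>J. Z \<le> S J"
    proof (rule ccontr)
      assume "\<nexists>J. Z \<le> S J"
      then have "summable (\<lambda>i. g (i + N))"
        using assms(1) unfolding S_def by (intro summableI_nonneg_bounded[where x = Z])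
          (auto simp: add.commute not_le less_imp_le)
      then show False using assms(3) by simp
    qed
    then obtain J where "Z \<le> S J" by blast
    moreover have "S J \<le> S j" if "J \<le> j" for j
      unfolding S_def using assms(1) that by (intro sum_mono2) auto
    ultimately show "\<forall>\<^sub>F j in sequentially. Z \<le> S j"
      unfolding eventually_sequentially by (meson order_trans)
  qed
  then show "(\<lambda>j. exp (- S j)) \<longlonglongrightarrow> 0"
    using filterlim_compose[OF exp_at_bot] filterlim_uminus_at_top by blast
qed simp

lemma recursive_ineq_unrolled:
  fixes a g b :: "nat \<Rightarrow> real"
  assumes "\<And>k. 0 \<le> g k" "\<And>k. g k \<le> 1" "\<And>k. 0 \<le> b k"
    and rec: "\<And>k. N \<le> k \<Longrightarrow> a (Suc k) \<le> (1 - g k) * a k + g k * e + b k"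
  shows "max (a (N + j) - e) 0 \<le> (\<Prod>i<j. 1 - g (N + i)) * max (a N - e) 0 + (\<Sum>i<j. b (N + i))"
proof (induction j)
  case (Suc j)
  define k where "k = N + j"
  define p where "p = (\<Prod>i<j. 1 - g (N + i))"
  define s where "s = (\<Sum>i<j. b (N + i))"
  have "a (Suc k) - e \<le> (1 - g k) * (a k - e) + b k"
    using rec[of k] unfolding k_def by (simp add: algebra_simps)
  also have "\<dots> \<le> (1 - g k) * max (a k - e) 0 + b k"
    using assms(2) by (intro add_right_mono mult_left_mono) auto
  also have "\<dots> \<le> (1 - g k) * (p * max (a N - e) 0 + s) + b k"
    using Suc.IH assms(2) unfolding k_def p_def s_def by (intro add_right_mono mult_left_mono) auto
  also have "\<dots> \<le> (1 - g k) * p * max (a N - e) 0 + s + b k"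
  proof -
    have "0 \<le> s" unfolding s_def using assms(3) by (simp add: sum_nonneg)
    then have "(1 - g k) * s \<le> s" using assms(1)[of k] by (simp add: algebra_simps)
    then show ?thesis by (simp add: algebra_simps)
  qed
  finally have "a (N + Suc j) - e \<le> (\<Prod>i<Suc j. 1 - g (N + i)) * max (a N - e) 0 + (\<Sum>i<Suc j. b (N + i))"
    unfolding k_def p_def s_def by (simp add: algebra_simps)
  moreover have "0 \<le> (\<Prod>i<Suc j. 1 - g (N + i)) * max (a N - e) 0 + (\<Sum>i<Suc j. b (N + i))"
    using assms by (intro add_nonneg_nonneg mult_nonneg_nonneg prod_nonneg sum_nonneg) auto
  ultimately show ?case by simp
qed simp

lemma recursive_ineq_eventually_le:
  fixes a g d b :: "nat \<Rightarrow> real"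
  assumes g: "\<And>k. 0 \<le> g k" "\<And>k. g k \<le> 1" "\<not> summable g"
    and d: "eventually (\<lambda>k. d k \<le> e) sequentially"
    and b: "\<And>k. 0 \<le> b k" "summable b"
    and rec: "\<And>k. a (Suc k) \<le> (1 - g k) * a k + g k * d k + b k"
    and "e > 0"
  shows "eventually (\<lambda>k. a k \<le> 3 * e) sequentially"
proof -
  obtain N1 where N1: "\<And>k. N1 \<le> k \<Longrightarrow> d k \<le> e"
    using d by (auto simp: eventually_sequentially)
  obtain N2 where N2: "\<And>n. N2 \<le> n \<Longrightarrow> norm (\<Sum>i. b (i + n)) < e"
    using suminf_exist_split[OF \<open>e > 0\<close> b(2)] by blast
  define N where "N = max N1 N2"
  have "a (Suc k) \<le> (1 - g k) * a k + g k * e + b k" if "N \<le> k" for k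
    using rec[of k] mult_left_mono[OF N1 g(1)[of k]] that unfolding N_def by fastforce
  then have unrolled: "max (a (N + j) - e) 0
      \<le> (\<Prod>i<j. 1 - g (N + i)) * max (a N - e) 0 + (\<Sum>i<j. b (N + i))" for j
    using g b(1) by (intro recursive_ineq_unrolled) auto
  have "(\<Sum>i<j. b (N + i)) \<le> e" for j
  proof -
    have "(\<Sum>i<j. b (N + i)) \<le> (\<Sum>i. b (i + N))"
      using b by (simp add: add.commute sum_le_suminf)
    also have "\<dots> \<le> e"
      using N2[of N] unfolding N_def by simp
    finally show ?thesis .
  qed
  moreover have "eventually (\<lambda>j. (\<Prod>i<j. 1 - g (N + i)) * max (a N - e) 0 < e) sequentially"
  proof (rule order_tendstoD(2))
    show "(\<lambda>j. (\<Prod>i<j. 1 - g (N + i)) * max (a N - e) 0) \<longlonglongrightarrow> 0 * max (a N - e) 0"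
      by (intro tendsto_mult prod_one_minus_tendsto_zero g tendsto_const)
  qed (simp add: \<open>e > 0\<close>)
  ultimately have "eventually (\<lambda>j. a (j + N) \<le> 3 * e) sequentially"
    using unrolled \<open>e > 0\<close> by (elim eventually_mono) (smt (verit, best) add.commute)
  then show ?thesis
    by (rule eventually_sequentially_seg[THEN iffD1])
qed

lemma recursive_ineq_tendsto_zero:
  fixes a g d b :: "nat \<Rightarrow> real"
  assumes "\<And>k. 0 \<le> a k" and g: "\<And>k. 0 \<le> g k" "\<And>k. g k \<le> 1" "\<not> summable g"
    and d: "\<And>e. e > 0 \<Longrightarrow> eventually (\<lambda>k. d k \<le> e) sequentially"
    and b: "\<And>k. 0 \<le> b k" "summable b"
    and rec: "\<And>k. a (Suc k) \<le> (1 - g k) * a k + g k * d k + b k"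
  shows "a \<longlonglongrightarrow> 0"
proof (rule order_tendstoI)
  fix y :: real
  assume "y > 0"
  then have "eventually (\<lambda>k. a k \<le> 3 * (y / 4)) sequentially"
    using recursive_ineq_eventually_le[OF g d b rec, of "y / 4"] by simp
  then show "eventually (\<lambda>k. a k < y) sequentially"
    using \<open>y > 0\<close> by (elim eventually_mono) simp
next
  fix y :: real
  assume "y < 0"
  then show "eventually (\<lambda>k. y < a k) sequentially"
    using assms(1) by (simp add: less_le_trans)
qed

section \<open>Halpern iterations\<close>

lemma norm_scaleR_add_sq_le:
  fixes a c :: "'a::real_inner"
  shows "norm (l *\<^sub>R a + c)^2 \<le> norm c ^ 2 + 2 * l * inner a (l *\<^sub>R a + c)"
proof -
  have "norm (l *\<^sub>R a + c)^2 = norm c ^ 2 + 2 * l * inner a (l *\<^sub>R a + c) - l^2 * norm a ^ 2"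
    by (simp add: power2_norm_eq_inner inner_add_left inner_add_right inner_commute algebra_simps
        power2_eq_square[of l])
  then show ?thesis by simp
qed

context
  fixes lam :: "nat \<Rightarrow> real" and T :: "'a::real_inner \<Rightarrow> 'a" and u q :: 'a and x :: "nat \<Rightarrow> 'a"
  assumes steering: "steering_sequence lam"
    and nonexp: "\<And>y z. norm (T y - T z) \<le> norm (y - z)"
    and fixed: "T q = q"
    and halpern: "\<And>k. x (Suc k) = lam k *\<^sub>R u + (1 - lam k) *\<^sub>R T (x k)"
begin

private lemma lam_bounds: "0 \<le> lam k" "lam k \<le> 1"
  using steering unfolding steering_sequence_def by auto

private lemma T_dist_le: "norm (T y - q) \<le> norm (y - q)"
  using nonexp[of y q] fixed by simp

lemma halpern_bounded: "norm (x k - q) \<le> max (norm (u - q)) (norm (x 0 - q))"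
  (is "_ \<le> ?R")
proof (induction k)
  case (Suc k)
  have "x (Suc k) - q = lam k *\<^sub>R (u - q) + (1 - lam k) *\<^sub>R (T (x k) - q)"
    unfolding halpern by (simp add: algebra_simps)
  then have "norm (x (Suc k) - q) \<le> lam k * norm (u - q) + (1 - lam k) * norm (T (x k) - q)"
    using lam_bounds[of k] by (metis abs_of_nonneg diff_ge_0_iff_ge norm_scaleR norm_triangle_ineq)
  also have "\<dots> \<le> lam k * ?R + (1 - lam k) * ?R"
    using lam_bounds[of k] T_dist_le[of "x k"] Suc.IH by (intro add_mono mult_left_mono) auto
  finally show ?case by (simp add: algebra_simps)
qed simp

lemma halpern_anchor_dist_bounded: obtains M where "\<And>k. norm (u - T (x k)) \<le> M"
proof
  fix k
  have "norm (u - T (x k)) \<le> norm (u - q) + norm (T (x k) - q)"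
    using norm_triangle_ineq[of "u - q" "q - T (x k)"] by (simp add: norm_minus_commute)
  also have "\<dots> \<le> norm (u - q) + max (norm (u - q)) (norm (x 0 - q))"
    using T_dist_le[of "x k"] halpern_bounded[of k] by simp
  finally show "norm (u - T (x k)) \<le> norm (u - q) + max (norm (u - q)) (norm (x 0 - q))" .
qed

lemma halpern_asymptotically_regular: "(\<lambda>k. x (Suc k) - x k) \<longlonglongrightarrow> 0"
proof -
  obtain M where M: "\<And>k. norm (u - T (x k)) \<le> M"
    using halpern_anchor_dist_bounded by blast
  have "(\<lambda>k. norm (x (Suc k) - x k)) \<longlonglongrightarrow> 0"
  proof (rule recursive_ineq_tendsto_zero[where g = "\<lambda>k. lam (Suc k)" and d = "\<lambda>k. 0"
        and b = "\<lambda>k. M * \<bar>lam (Suc k) - lam k\<bar>"])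
    show "\<not> summable (\<lambda>k. lam (Suc k))"
      using steering unfolding steering_sequence_def by (simp add: summable_Suc_iff)
    show "summable (\<lambda>k. M * \<bar>lam (Suc k) - lam k\<bar>)"
      using steering unfolding steering_sequence_def by (simp add: summable_mult)
    show "0 \<le> M * \<bar>lam (Suc k) - lam k\<bar>" for k
      using M[of k] norm_ge_zero order_trans by (metis abs_ge_zero mult_nonneg_nonneg)
    fix k
    have "x (Suc (Suc k)) - x (Suc k)
        = (lam (Suc k) - lam k) *\<^sub>R (u - T (x k)) + (1 - lam (Suc k)) *\<^sub>R (T (x (Suc k)) - T (x k))"
      unfolding halpern[of "Suc k"] halpern[of k] by (simp add: algebra_simps)
    then have "norm (x (Suc (Suc k)) - x (Suc k))
        \<le> \<bar>lam (Suc k) - lam k\<bar> * norm (u - T (x k))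
          + \<bar>1 - lam (Suc k)\<bar> * norm (T (x (Suc k)) - T (x k))"
      by (metis norm_scaleR norm_triangle_ineq)
    also have "\<dots> \<le> \<bar>lam (Suc k) - lam k\<bar> * M + (1 - lam (Suc k)) * norm (x (Suc k) - x k)"
    proof (rule add_mono)
      show "\<bar>lam (Suc k) - lam k\<bar> * norm (u - T (x k)) \<le> \<bar>lam (Suc k) - lam k\<bar> * M"
        using M[of k] by (simp add: mult_left_mono)
      show "\<bar>1 - lam (Suc k)\<bar> * norm (T (x (Suc k)) - T (x k))
          \<le> (1 - lam (Suc k)) * norm (x (Suc k) - x k)"
        using nonexp lam_bounds[of "Suc k"] by (simp add: mult_left_mono)
    qed
    finally show "norm (x (Suc (Suc k)) - x (Suc k))
        \<le> (1 - lam (Suc k)) * norm (x (Suc k) - x k) + lam (Suc k) * 0 + M * \<bar>lam (Suc k) - lam k\<bar>"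
      by (simp add: algebra_simps)
  qed (use lam_bounds in auto)
  then show ?thesis
    by (simp add: tendsto_norm_zero_iff)
qed

lemma halpern_residual_tendsto_zero: "(\<lambda>k. x k - T (x k)) \<longlonglongrightarrow> 0"
proof -
  obtain M where M: "\<And>k. norm (u - T (x k)) \<le> M"
    using halpern_anchor_dist_bounded by blast
  have bound: "norm (x k - T (x k)) \<le> norm (x (Suc k) - x k) + lam k * M" for k
  proof -
    have "x k - T (x k) = (x k - x (Suc k)) + lam k *\<^sub>R (u - T (x k))"
      unfolding halpern by (simp add: algebra_simps)
    then have "norm (x k - T (x k)) \<le> norm (x k - x (Suc k)) + lam k * norm (u - T (x k))"
      using lam_bounds[of k] by (metis abs_of_nonneg norm_scaleR norm_triangle_ineq)
    also have "\<dots> \<le> norm (x (Suc k) - x k) + lam k * M"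
      using lam_bounds[of k] M[of k] by (simp add: norm_minus_commute mult_left_mono)
    finally show ?thesis .
  qed
  have "(\<lambda>k. norm (x (Suc k) - x k) + lam k * M) \<longlonglongrightarrow> 0"
  proof -
    have "lam \<longlonglongrightarrow> 0"
      using steering unfolding steering_sequence_def by simp
    then have "(\<lambda>k. lam k * M) \<longlonglongrightarrow> 0"
      by (rule tendsto_mult_left_zero)
    with tendsto_norm_zero[OF halpern_asymptotically_regular] show ?thesis
      by (rule tendsto_add_zero)
  qed
  then show ?thesis
    by (rule Lim_null_comparison[rotated]) (simp add: bound)
qed

lemma halpern_tendsto:
  assumes "\<And>e. e > 0 \<Longrightarrow> eventually (\<lambda>k. inner (u - q) (x k - q) \<le> e) sequentially"
  shows "x \<longlonglongrightarrow> q"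
proof -
  have "(\<lambda>k. norm (x k - q)^2) \<longlonglongrightarrow> 0"
  proof (rule recursive_ineq_tendsto_zero[where g = lam and d = "\<lambda>k. 2 * inner (u - q) (x (Suc k) - q)"
        and b = "\<lambda>k. 0"])
    show "\<not> summable lam"
      using steering unfolding steering_sequence_def by simp
    show "\<forall>\<^sub>F k in sequentially. 2 * inner (u - q) (x (Suc k) - q) \<le> e" if "e > 0" for e
    proof -
      have "\<forall>\<^sub>F k in sequentially. inner (u - q) (x k - q) \<le> e / 2"
        using assms[of "e / 2"] that by simp
      then have "\<forall>\<^sub>F k in sequentially. inner (u - q) (x (Suc k) - q) \<le> e / 2"
        by (rule eventually_sequentially_Suc[THEN iffD2])
      then show ?thesis
        by (rule eventually_mono) simp
    qed
    fix k
    have "x (Suc k) - q = lam k *\<^sub>R (u - q) + (1 - lam k) *\<^sub>R (T (x k) - q)"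
      unfolding halpern by (simp add: algebra_simps)
    then have "norm (x (Suc k) - q)^2
        \<le> (1 - lam k)^2 * norm (T (x k) - q)^2 + 2 * lam k * inner (u - q) (x (Suc k) - q)"
      using norm_scaleR_add_sq_le[of "lam k" "u - q" "(1 - lam k) *\<^sub>R (T (x k) - q)"]
      by (simp add: power_mult_distrib)
    also have "(1 - lam k)^2 * norm (T (x k) - q)^2 \<le> (1 - lam k) * norm (x k - q)^2"
    proof (rule mult_mono)
      show "(1 - lam k)^2 \<le> 1 - lam k"
        using lam_bounds[of k] by (simp add: power2_eq_square mult_left_le_one_le)
      show "norm (T (x k) - q)^2 \<le> norm (x k - q)^2"
        using T_dist_le[of "x k"] by (simp add: power_mono)
    qed (use lam_bounds[of k] in simp_all)
    finally show "norm (x (Suc k) - q)^2 \<le> (1 - lam k) * norm (x k - q)^2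
        + lam k * (2 * inner (u - q) (x (Suc k) - q)) + 0"
      by simp
  qed (simp_all add: lam_bounds)
  then have "(\<lambda>k. norm (x k - q)) \<longlonglongrightarrow> 0"
    using tendsto_real_sqrt by fastforce
  then show ?thesis
    by (simp add: LIM_zero_iff tendsto_norm_zero_iff)
qed

end

lemma halpern_tendsto_metric_proj:
  fixes T :: "'a::{real_inner,complete_space} \<Rightarrow> 'a" and Cs :: "'i \<Rightarrow> 'a set"
  assumes steering: "steering_sequence lam"
    and nonexp: "\<And>y z. norm (T y - T z) \<le> norm (y - z)"
    and halpern: "\<And>k. x (Suc k) = lam k *\<^sub>R u + (1 - lam k) *\<^sub>R T (x k)"
    and "finite I" and sets: "\<And>i. i \<in> I \<Longrightarrow> closed (Cs i) \<and> convex (Cs i)"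
    and "(\<Inter>i\<in>I. Cs i) \<noteq> {}" and fixed: "\<And>z. z \<in> (\<Inter>i\<in>I. Cs i) \<Longrightarrow> T z = z"
    and approach: "\<And>i. i \<in> I \<Longrightarrow> (\<lambda>k. infdist (x k) (Cs i)) \<longlonglongrightarrow> 0"
  shows "x \<longlonglongrightarrow> metric_proj (\<Inter>i\<in>I. Cs i) u"
proof -
  define C where "C = (\<Inter>i\<in>I. Cs i)"
  define q where "q = metric_proj C u"
  have "closed C" "convex C"
    unfolding C_def using sets by (auto intro: closed_INT convex_INT)
  moreover have "C \<noteq> {}"
    unfolding C_def by fact
  ultimately have "q \<in> C"
    unfolding q_def by (rule metric_proj_mem)
  then have "T q = q"
    unfolding C_def by (rule fixed)
  note iteration = steering nonexp this halpern
  have "x \<longlonglongrightarrow> q"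
  proof (rule halpern_tendsto[OF iteration])
    fix e :: real
    assume "e > 0"
    show "eventually (\<lambda>k. inner (u - q) (x k - q) \<le> e) sequentially"
    proof (rule eventually_inner_le_if_infdist_tendsto_zero[OF \<open>finite I\<close> _
          halpern_bounded[OF iteration] approach _ \<open>e > 0\<close>])
      show "closed (Cs i) \<and> convex (Cs i) \<and> Cs i \<noteq> {}" if "i \<in> I" for i
        using sets[OF that] \<open>q \<in> C\<close> that unfolding C_def by blast
      show "inner (u - q) (y - q) \<le> 0" if "\<And>i. i \<in> I \<Longrightarrow> y \<in> Cs i" for y
      proof -
        have "y \<in> C"
          unfolding C_def using that by blast
        then show ?thesis
          unfolding q_def by (rule metric_proj_variational_ineq[OF \<open>closed C\<close> \<open>convex C\<close>])
      qed
    qed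
  qed
  then show ?thesis
    unfolding q_def C_def .
qed

theorem theorem7:
  fixes D :: "'a::{real_inner,complete_space} set"
    and Cs :: "nat \<Rightarrow> 'a set" and m :: nat
    and \<Omega> :: "nat list set" and w :: "nat list \<Rightarrow> real"
    and lam :: "nat \<Rightarrow> real" and u x0 :: 'a and x :: "nat \<Rightarrow> 'a"
  assumes "D \<noteq> {}" and "closed D" and "convex D"
    and "\<And>i. i \<in> {1..m} \<Longrightarrow> closed (Cs i) \<and> convex (Cs i) \<and> Cs i \<subseteq> D"
    and "(\<Inter>i\<in>{1..m}. Cs i) \<noteq> {}"
    and "in_M m \<Omega> w"
    and "steering_sequence lam"
    and "u \<in> D" and "x0 \<in> D"
    and "x 0 = x0"
    and "\<And>k. x (Suc k) = lam k *\<^sub>R u + (1 - lam k) *\<^sub>R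
           (\<Sum>t\<in>\<Omega>. w t *\<^sub>R proj_comp (\<lambda>i. metric_proj (Cs i)) t (x k))"
  shows "x \<longlonglongrightarrow> metric_proj (\<Inter>i\<in>{1..m}. Cs i) u"
proof -
  \<comment> \<open>metric_proj is defined on the whole space\<close>
  have w_pos: "\<And>t. t \<in> \<Omega> \<Longrightarrow> 0 < w t" and "sum w \<Omega> = 1"
    and indices: "\<And>t. t \<in> \<Omega> \<Longrightarrow> set t \<subseteq> {1..m}"
    and fit: "\<And>i. i \<in> {1..m} \<Longrightarrow> \<exists>t\<in>\<Omega>. i \<in> set t"
    using assms(6) unfolding in_M_def fit_def index_vector_def by auto
  have avg: "averaged_projections Cs \<Omega> w z" if "z \<in> (\<Inter>i\<in>{1..m}. Cs i)" for z
  proof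
    show "0 \<le> w t" if "t \<in> \<Omega>" for t
      using w_pos[OF that] by simp
    show "closed (Cs i) \<and> convex (Cs i) \<and> z \<in> Cs i" if "t \<in> \<Omega>" "i \<in> set t" for t i
      using assms(4) indices[OF that(1)] that(2) \<open>z \<in> _\<close> by blast
  qed fact
  obtain z where z: "z \<in> (\<Inter>i\<in>{1..m}. Cs i)"
    using assms(5) by blast
  interpret averaged_projections Cs \<Omega> w z
    by (rule avg[OF z])
  note halpern = assms(7) T_nonexpansive T_fixed assms(11)[folded averaged_comp_def]
  have "(\<lambda>k. infdist (x k) (Cs i)) \<longlonglongrightarrow> 0" if i: "i \<in> {1..m}" for i
  proof -
    obtain s where "s \<in> \<Omega>" "0 < w s" "i \<in> set s"
      using fit[OF i] w_pos by blast
    then show ?thesis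
      using halpern_bounded[OF halpern] halpern_residual_tendsto_zero[OF halpern]
      by (rule infdist_tendsto_zero)
  qed
  moreover have "T y = y" if "y \<in> (\<Inter>i\<in>{1..m}. Cs i)" for y
    by (rule averaged_projections.T_fixed[OF avg[OF that]])
  ultimately show ?thesis
    using assms(4,5) by (intro halpern_tendsto_metric_proj[OF halpern(1,2,4)]) simp_all
qed

end
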